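(* Let $C$ be a strictly convex subset of a topological real vector space, $f:C\to\mathbb{R}$ a strictly sub-convex function, $D\subseteq\mathbb{R}$ a subset containing $f(C)$, and $\varphi:D\to\mathbb{R}$ a non-decreasing function that is lower semi-continuous (for the subspace topology of $D$). Then $g:C\to\mathbb{R}$, $g(x)=\varphi(f(x))$, is strictly sub-convex.
   Context: Topological real vector spaces are not assumed Hausdorff. $S_r(h)=\{x: h(x)\le r\}$ for a real function $h$. For a subset $S$, $\mathrm{Aff}(S)$ is its affine hull; $\mathrm{ri}(S)$, $\mathrm{rc}(S)$ are the interior and closure of $S$ in the subspace topology of $\mathrm{Aff}(S)$. $]x,y[=\{(1-t)x+ty: t\in[0,1]\}\setminus\{x,y\}$. A set is strictly convex if for any two distinct $x,y$ in its relative closure, $]x,y[$ lies in its relative interior. A function $f$ on $C$ is strictly sub-convex if $S_r(f)$ is strictly convex for every $r\in\mathbb{R}$. *)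

theory Defs
  imports "HOL-Analysis.Analysis"
begin

definition tvs_topology :: "'a::real_vector topology \<Rightarrow> bool" where
  "tvs_topology T \<longleftrightarrow> topspace T = UNIV
     \<and> continuous_map (prod_topology T T) T (\<lambda>(x, y). x + y)
     \<and> continuous_map (prod_topology euclideanreal T) T (\<lambda>(a, x). a *\<^sub>R x)"

definition rel_int :: "'a::real_vector topology \<Rightarrow> 'a set \<Rightarrow> 'a set" where
  "rel_int T S = (subtopology T (affine hull S)) interior_of S"

definition rel_clos :: "'a::real_vector topology \<Rightarrow> 'a set \<Rightarrow> 'a set" where
  "rel_clos T S = (subtopology T (affine hull S)) closure_of S"

definition strictly_convex_set :: "'a::real_vector topology \<Rightarrow> 'a set \<Rightarrow> bool" where
  "strictly_convex_set T S \<longleftrightarrow>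
     (\<forall>x\<in>rel_clos T S. \<forall>y\<in>rel_clos T S. x \<noteq> y \<longrightarrow> open_segment x y \<subseteq> rel_int T S)"

definition sublevel :: "'a set \<Rightarrow> ('a \<Rightarrow> real) \<Rightarrow> real \<Rightarrow> 'a set" where
  "sublevel C h r = {x \<in> C. h x \<le> r}"

definition strictly_subconvex :: "'a::real_vector topology \<Rightarrow> 'a set \<Rightarrow> ('a \<Rightarrow> real) \<Rightarrow> bool" where
  "strictly_subconvex T C f \<longleftrightarrow> (\<forall>r::real. strictly_convex_set T (sublevel C f r))"

definition lsc_on :: "real set \<Rightarrow> (real \<Rightarrow> real) \<Rightarrow> bool" where
  "lsc_on D \<phi> \<longleftrightarrow> (\<forall>a. openin (top_of_set D) {t \<in> D. a < \<phi> t})"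

end

theory Submission
  imports Defs
begin

text \<open>For non-decreasing lower semi-continuous \<open>\<phi>\<close> on \<open>D\<close>, the set \<open>{t \<in> D. \<phi> t \<le> r}\<close> is
  a down-closed and relatively closed subset of \<open>D\<close>, hence empty, all of \<open>D\<close>, or
  \<open>{t \<in> D. t \<le> s}\<close> with \<open>s\<close> its supremum. Consequently every sublevel set of \<open>\<phi> \<circ> f\<close> is
  empty, \<open>C\<close>, or a sublevel set of \<open>f\<close>, and all three are strictly convex.\<close>

lemma strictly_convex_set_empty: "strictly_convex_set T {}"
  unfolding strictly_convex_set_def rel_clos_def by simp

lemma lsc_on_sublevel_closedin:
  assumes "lsc_on D \<phi>"
  shows "closedin (top_of_set D) {t \<in> D. \<phi> t \<le> r}"
proof -
  have "openin (top_of_set D) {t \<in> D. r < \<phi> t}"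
    using assms unfolding lsc_on_def by blast
  then have "closedin (top_of_set D) (D - {t \<in> D. r < \<phi> t})"
    by (simp add: openin_closedin_eq)
  moreover have "D - {t \<in> D. r < \<phi> t} = {t \<in> D. \<phi> t \<le> r}"
    by auto
  ultimately show ?thesis
    by simp
qed

lemma Sup_mem_closedin:
  fixes E D :: "real set"
  assumes "closedin (top_of_set D) E" "E \<noteq> {}" "bdd_above E" "Sup E \<in> D"
  shows "Sup E \<in> E"
proof -
  obtain F where F: "closed F" "E = D \<inter> F"
    using assms(1) closedin_closed by blast
  have "Sup E \<in> closure E"
    using assms(2,3) by (rule closure_contains_Sup)
  also have "\<dots> \<subseteq> F"
    using F closure_minimal by blast
  finally show ?thesis
    using F(2) assms(4) by simp
qed

lemma mono_lsc_sublevel_cases: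
  fixes \<phi> :: "real \<Rightarrow> real"
  assumes mono: "mono_on D \<phi>" and lsc: "lsc_on D \<phi>"
  obtains "{t \<in> D. \<phi> t \<le> r} = {}"
    | "{t \<in> D. \<phi> t \<le> r} = D"
    | s where "{t \<in> D. \<phi> t \<le> r} = {t \<in> D. t \<le> s}"
proof -
  define E where "E = {t \<in> D. \<phi> t \<le> r}"
  have E_sub: "E \<subseteq> D"
    unfolding E_def by blast
  have down_closed: "t \<in> E" if "t \<in> D" "e \<in> E" "t \<le> e" for t e
    using that mono_onD[OF mono, of t e] unfolding E_def by auto
  consider "E = {}" | "E \<noteq> {}" "\<not> bdd_above E" | "E \<noteq> {}" "bdd_above E"
    by metis
  then show thesis
  proof cases
    case 1
    then show thesis using that(1) unfolding E_def by blast
  next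
    case 2
    have "E = D"
    proof
      show "D \<subseteq> E"
      proof
        fix t assume "t \<in> D"
        obtain e where "e \<in> E" "t \<le> e"
          using 2(2) unfolding bdd_above_def by (auto simp: not_le intro: less_imp_le)
        then show "t \<in> E" using down_closed \<open>t \<in> D\<close> by blast
      qed
    qed (rule E_sub)
    then show thesis using that(2) unfolding E_def by blast
  next
    case 3
    have "E = {t \<in> D. t \<le> Sup E}"
    proof (intro equalityI subsetI)
      fix t assume "t \<in> E"
      then show "t \<in> {t \<in> D. t \<le> Sup E}"
        using E_sub cSup_upper[OF _ 3(2)] by blast
    next
      fix t assume t: "t \<in> {t \<in> D. t \<le> Sup E}"
      show "t \<in> E"
      proof (cases "t = Sup E")
        case True
        have "closedin (top_of_set D) E"
          unfolding E_def using lsc by (rule lsc_on_sublevel_closedin)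
        then have "Sup E \<in> E"
          using Sup_mem_closedin 3 t True by blast
        then show ?thesis
          using True by simp
      next
        case False
        then have "t < Sup E"
          using t by simp
        then obtain e where "e \<in> E" "t < e"
          using less_cSup_iff[OF 3] by blast
        then show ?thesis using down_closed t by auto
      qed
    qed
    then show thesis using that(3) unfolding E_def by blast
  qed
qed

lemma sublevel_comp:
  assumes "f ` C \<subseteq> D"
  shows "sublevel C (\<lambda>x. \<phi> (f x)) r = {x \<in> C. f x \<in> {t \<in> D. \<phi> t \<le> r}}"
  using assms unfolding sublevel_def by auto

theorem mainTheorem7:
  fixes T :: "'a::real_vector topology"
    and C :: "'a set" and f :: "'a \<Rightarrow> real"
    and D :: "real set" and \<phi> :: "real \<Rightarrow> real"
  assumes "tvs_topology T"
    and "strictly_convex_set T C"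
    and "strictly_subconvex T C f"
    and "f ` C \<subseteq> D"
    and "mono_on D \<phi>"
    and "lsc_on D \<phi>"
  shows "strictly_subconvex T C (\<lambda>x. \<phi> (f x))"
  unfolding strictly_subconvex_def
proof
  fix r
  have level: "sublevel C (\<lambda>x. \<phi> (f x)) r = {x \<in> C. f x \<in> {t \<in> D. \<phi> t \<le> r}}"
    using assms(4) by (rule sublevel_comp)
  from assms(5,6) show "strictly_convex_set T (sublevel C (\<lambda>x. \<phi> (f x)) r)"
  proof (cases rule: mono_lsc_sublevel_cases[where r = r])
    case 1
    then have "sublevel C (\<lambda>x. \<phi> (f x)) r = {}" using level by auto
    then show ?thesis using strictly_convex_set_empty by simp
  next
    case 2
    then have "sublevel C (\<lambda>x. \<phi> (f x)) r = C" using level assms(4) by auto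
    then show ?thesis using assms(2) by simp
  next
    case (3 s)
    then have "sublevel C (\<lambda>x. \<phi> (f x)) r = sublevel C f s"
      using level assms(4) unfolding sublevel_def by auto
    then show ?thesis using assms(3) unfolding strictly_subconvex_def by simp
  qed
qed

end
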